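(* Let $S,T$ be ordered trees, let $f\colon T\to S$ be a rigid surjection with injection $i$, and let $v\in S$. Then the domain of $f^v$ is $T^{i(v)}$, the image of $T^{i(v)}$ under $f^v$ is $S^v$, and $f^v\colon T^{i(v)}\to S^v$ is a sealed rigid surjection.
   Context: A tree is a finite, non-empty partially ordered set $(T,\sqsubseteq_T)$ with a smallest element (the root) such that the set of predecessors of each element is linearly ordered; each node counts as its own predecessor and successor. $v\wedge_T w$ is the $\sqsubseteq_T$-largest common predecessor of $v,w$. A tree is ordered if the immediate successors of each node carry a fixed linear order; this induces the lexicographic linear order $\leq_T$: $v\leq_T w$ if $v\sqsubseteq_T w$, and for incomparable $v,w$, $v\leq_T w$ iff the immediate successor of $v\wedge_T w$ below $v$ precedes the one below $w$. A morphism $e\colon S\to T$ satisfies $e(v\wedge_S w)=e(v)\wedge_T e(w)$, is monotone from $\leq_S$ to $\leq_T$, and maps root to root. A function $f\colon T\to S$ is a rigid surjection if there is a morphism $e\colon S\to T$ with $f\circ e={\rm id}_S$ and $e(f(w))\sqsubseteq_T w$ for all $w$; this $e$ is unique and called the injection of $f$. For $v\in S$, $S^v=\{w\in S\mid w\leq_S v\}$ (an ordered tree with inherited orders). For a rigid surjection $f\colon T\to S$ with injection $i$ and $v\in S$, $f^v=f\upharpoonright T^{i(v)}$. A rigid surjection $f\colon T\to S$ is sealed if its injection maps the $\leq_S$-largest leaf of $S$ to the $\leq_T$-largest leaf of $T$ (a leaf is a $\sqsubseteq$-maximal node). *)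

theory Defs
  imports "HOL-Library.FuncSet"
begin

text \<open>An ordered tree is given by a carrier set T, the tree order P (written \<sqsubseteq>)
 and a sibling order L, which on the set of immediate successors of each node
 is a (non-strict) linear order. Values of L outside such sibling sets are irrelevant.\<close>

definition tree :: "'a set \<Rightarrow> ('a \<Rightarrow> 'a \<Rightarrow> bool) \<Rightarrow> bool" where
  "tree T P \<longleftrightarrow> finite T \<and> T \<noteq> {}
     \<and> (\<forall>x\<in>T. P x x)
     \<and> (\<forall>x\<in>T. \<forall>y\<in>T. P x y \<and> P y x \<longrightarrow> x = y)
     \<and> (\<forall>x\<in>T. \<forall>y\<in>T. \<forall>z\<in>T. P x y \<and> P y z \<longrightarrow> P x z)
     \<and> (\<exists>r\<in>T. \<forall>x\<in>T. P r x)
     \<and> (\<forall>w\<in>T. \<forall>u\<in>T. \<forall>v\<in>T. P u w \<and> P v w \<longrightarrow> P u v \<or> P v u)"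

definition isucc :: "'a set \<Rightarrow> ('a \<Rightarrow> 'a \<Rightarrow> bool) \<Rightarrow> 'a \<Rightarrow> 'a \<Rightarrow> bool" where
  "isucc T P v w \<longleftrightarrow> v \<in> T \<and> w \<in> T \<and> P v w \<and> v \<noteq> w
     \<and> (\<forall>u\<in>T. P v u \<and> P u w \<longrightarrow> u = v \<or> u = w)"

definition ordered_tree :: "'a set \<Rightarrow> ('a \<Rightarrow> 'a \<Rightarrow> bool) \<Rightarrow> ('a \<Rightarrow> 'a \<Rightarrow> bool) \<Rightarrow> bool" where
  "ordered_tree T P L \<longleftrightarrow> tree T P \<and>
     (\<forall>v\<in>T. let C = {w. isucc T P v w} in
        (\<forall>x\<in>C. L x x)
      \<and> (\<forall>x\<in>C. \<forall>y\<in>C. L x y \<and> L y x \<longrightarrow> x = y)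
      \<and> (\<forall>x\<in>C. \<forall>y\<in>C. \<forall>z\<in>C. L x y \<and> L y z \<longrightarrow> L x z)
      \<and> (\<forall>x\<in>C. \<forall>y\<in>C. L x y \<or> L y x))"

definition troot :: "'a set \<Rightarrow> ('a \<Rightarrow> 'a \<Rightarrow> bool) \<Rightarrow> 'a" where
  "troot T P = (THE r. r \<in> T \<and> (\<forall>x\<in>T. P r x))"

definition tmeet :: "'a set \<Rightarrow> ('a \<Rightarrow> 'a \<Rightarrow> bool) \<Rightarrow> 'a \<Rightarrow> 'a \<Rightarrow> 'a" where
  "tmeet T P v w = (THE u. u \<in> T \<and> P u v \<and> P u w \<and> (\<forall>u'\<in>T. P u' v \<and> P u' w \<longrightarrow> P u' u))"

definition child_toward :: "'a set \<Rightarrow> ('a \<Rightarrow> 'a \<Rightarrow> bool) \<Rightarrow> 'a \<Rightarrow> 'a \<Rightarrow> 'a" where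
  "child_toward T P m v = (THE c. isucc T P m c \<and> P c v)"

definition lex :: "'a set \<Rightarrow> ('a \<Rightarrow> 'a \<Rightarrow> bool) \<Rightarrow> ('a \<Rightarrow> 'a \<Rightarrow> bool) \<Rightarrow> 'a \<Rightarrow> 'a \<Rightarrow> bool" where
  "lex T P L v w \<longleftrightarrow> v \<in> T \<and> w \<in> T \<and>
     (P v w \<or> (\<not> P v w \<and> \<not> P w v \<and>
        L (child_toward T P (tmeet T P v w) v) (child_toward T P (tmeet T P v w) w)))"

definition morphism ::
  "'b set \<Rightarrow> ('b \<Rightarrow> 'b \<Rightarrow> bool) \<Rightarrow> ('b \<Rightarrow> 'b \<Rightarrow> bool) \<Rightarrow>
   'a set \<Rightarrow> ('a \<Rightarrow> 'a \<Rightarrow> bool) \<Rightarrow> ('a \<Rightarrow> 'a \<Rightarrow> bool) \<Rightarrow> ('b \<Rightarrow> 'a) \<Rightarrow> bool" where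
  "morphism S PS LS T PT LT e \<longleftrightarrow>
     (\<forall>x\<in>S. e x \<in> T)
   \<and> (\<forall>v\<in>S. \<forall>w\<in>S. e (tmeet S PS v w) = tmeet T PT (e v) (e w))
   \<and> (\<forall>v\<in>S. \<forall>w\<in>S. lex S PS LS v w \<longrightarrow> lex T PT LT (e v) (e w))
   \<and> e (troot S PS) = troot T PT"

definition is_injection ::
  "'a set \<Rightarrow> ('a \<Rightarrow> 'a \<Rightarrow> bool) \<Rightarrow> ('a \<Rightarrow> 'a \<Rightarrow> bool) \<Rightarrow>
   'b set \<Rightarrow> ('b \<Rightarrow> 'b \<Rightarrow> bool) \<Rightarrow> ('b \<Rightarrow> 'b \<Rightarrow> bool) \<Rightarrow> ('a \<Rightarrow> 'b) \<Rightarrow> ('b \<Rightarrow> 'a) \<Rightarrow> bool" where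
  "is_injection T PT LT S PS LS f e \<longleftrightarrow>
     (\<forall>w\<in>T. f w \<in> S)
   \<and> morphism S PS LS T PT LT e
   \<and> (\<forall>s\<in>S. f (e s) = s)
   \<and> (\<forall>w\<in>T. PT (e (f w)) w)"

definition rigid_surj ::
  "'a set \<Rightarrow> ('a \<Rightarrow> 'a \<Rightarrow> bool) \<Rightarrow> ('a \<Rightarrow> 'a \<Rightarrow> bool) \<Rightarrow>
   'b set \<Rightarrow> ('b \<Rightarrow> 'b \<Rightarrow> bool) \<Rightarrow> ('b \<Rightarrow> 'b \<Rightarrow> bool) \<Rightarrow> ('a \<Rightarrow> 'b) \<Rightarrow> bool" where
  "rigid_surj T PT LT S PS LS f \<longleftrightarrow> (\<exists>e. is_injection T PT LT S PS LS f e)"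

definition leaf :: "'a set \<Rightarrow> ('a \<Rightarrow> 'a \<Rightarrow> bool) \<Rightarrow> 'a \<Rightarrow> bool" where
  "leaf T P x \<longleftrightarrow> x \<in> T \<and> (\<forall>y\<in>T. P x y \<longrightarrow> y = x)"

definition largest_leaf :: "'a set \<Rightarrow> ('a \<Rightarrow> 'a \<Rightarrow> bool) \<Rightarrow> ('a \<Rightarrow> 'a \<Rightarrow> bool) \<Rightarrow> 'a \<Rightarrow> bool" where
  "largest_leaf T P L x \<longleftrightarrow> leaf T P x \<and> (\<forall>y. leaf T P y \<longrightarrow> lex T P L y x)"

definition sealed_rigid_surj ::
  "'a set \<Rightarrow> ('a \<Rightarrow> 'a \<Rightarrow> bool) \<Rightarrow> ('a \<Rightarrow> 'a \<Rightarrow> bool) \<Rightarrow>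
   'b set \<Rightarrow> ('b \<Rightarrow> 'b \<Rightarrow> bool) \<Rightarrow> ('b \<Rightarrow> 'b \<Rightarrow> bool) \<Rightarrow> ('a \<Rightarrow> 'b) \<Rightarrow> bool" where
  "sealed_rigid_surj T PT LT S PS LS f \<longleftrightarrow>
     (\<exists>e. is_injection T PT LT S PS LS f e \<and>
        (\<forall>lS lT. largest_leaf S PS LS lS \<longrightarrow> largest_leaf T PT LT lT \<longrightarrow> e lS = lT))"

text \<open>\<open>T^v = {w \<in> T. w \<le>_T v}\<close>, with inherited orders (same relations P, L).\<close>
definition lexdown :: "'a set \<Rightarrow> ('a \<Rightarrow> 'a \<Rightarrow> bool) \<Rightarrow> ('a \<Rightarrow> 'a \<Rightarrow> bool) \<Rightarrow> 'a \<Rightarrow> 'a set" where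
  "lexdown T P L v = {w \<in> T. lex T P L w v}"

end

theory Submission imports Defs begin

text \<open>Meets, immediate successors, the root and hence the lexicographic order of a tree do not
  change when passing to a downward closed subset, and lexicographic initial segments such as
  T^i(v) and S^v are downward closed. Monotonicity of i gives i(S^v) \<subseteq> T^i(v); conversely,
  if w \<le> i(v) but v < f(w), then i(v) \<le> i(f(w)) \<le> w because i(f(w)) \<sqsubseteq> w, forcing
  w = i(v). So f restricts to a rigid surjection T^i(v) \<rightarrow> S^v with injection i, and it is
  sealed because the largest leaf of an initial segment T^u is u itself.\<close>

locale rooted_tree =
  fixes T :: "'a set" and P :: "'a \<Rightarrow> 'a \<Rightarrow> bool"
  assumes tree: "tree T P"
begin

lemma tree_finite: "finite T"
  using tree unfolding tree_def by blast

lemma tree_refl: "x \<in> T \<Longrightarrow> P x x"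
  using tree unfolding tree_def by blast

lemma tree_antisym: "x \<in> T \<Longrightarrow> y \<in> T \<Longrightarrow> P x y \<Longrightarrow> P y x \<Longrightarrow> x = y"
  using tree unfolding tree_def by blast

lemma tree_trans: "x \<in> T \<Longrightarrow> y \<in> T \<Longrightarrow> z \<in> T \<Longrightarrow> P x y \<Longrightarrow> P y z \<Longrightarrow> P x z"
  using tree unfolding tree_def by blast

lemma tree_root_exists: "\<exists>r\<in>T. \<forall>x\<in>T. P r x"
  using tree unfolding tree_def by blast

lemma predecessors_comparable:
  "w \<in> T \<Longrightarrow> u \<in> T \<Longrightarrow> v \<in> T \<Longrightarrow> P u w \<Longrightarrow> P v w \<Longrightarrow> P u v \<or> P v u"
  using tree unfolding tree_def by blast

lemma troot_eqI: "r \<in> T \<Longrightarrow> \<forall>x\<in>T. P r x \<Longrightarrow> troot T P = r"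
  unfolding troot_def by (rule the_equality) (use tree_antisym in blast)+

definition depth :: "'a \<Rightarrow> nat" where
  "depth x = card {y \<in> T. P y x}"

lemma depth_strict_mono:
  assumes "u \<in> T" "w \<in> T" "P u w" "u \<noteq> w"
  shows "depth u < depth w"
proof -
  have "{y \<in> T. P y u} \<subset> {y \<in> T. P y w}"
    using assms tree_trans[of _ u w] tree_antisym[of w u] tree_refl[of w] by blast
  then show ?thesis
    unfolding depth_def by (intro psubset_card_mono) (auto intro: finite_subset[OF _ tree_finite])
qed

lemma exists_maximal:
  assumes "A \<subseteq> T" "A \<noteq> {}"
  shows "\<exists>x\<in>A. \<forall>y\<in>A. P x y \<longrightarrow> y = x"
proof -
  have A: "finite A" using assms tree_finite finite_subset by blast
  obtain x where x: "x \<in> A" "depth x = Max (depth ` A)"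
    using Max_in[of "depth ` A"] A assms(2) by (metis empty_is_image finite_imageI imageE)
  have "depth y \<le> depth x" if "y \<in> A" for y
    using that A x(2) by simp
  then show ?thesis
    using x(1) assms(1) depth_strict_mono by (metis leD subsetD)
qed

lemma exists_minimal:
  assumes "A \<subseteq> T" "A \<noteq> {}"
  shows "\<exists>x\<in>A. \<forall>y\<in>A. P y x \<longrightarrow> y = x"
proof -
  have "finite A" using assms tree_finite finite_subset by blast
  then obtain x where "is_arg_min depth (\<lambda>y. y \<in> A) x"
    using ex_is_arg_min_if_finite assms(2) by blast
  then show ?thesis
    unfolding is_arg_min_def using assms(1) depth_strict_mono by blast
qed

lemma isuccD: "isucc T P m c \<Longrightarrow> m \<in> T \<and> c \<in> T \<and> P m c \<and> m \<noteq> c"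
  unfolding isucc_def by blast

lemma isucc_between: "isucc T P m c \<Longrightarrow> u \<in> T \<Longrightarrow> P m u \<Longrightarrow> P u c \<Longrightarrow> u = m \<or> u = c"
  unfolding isucc_def by blast

lemma isucc_unique:
  assumes "isucc T P m c" "isucc T P m c'" "P c a" "P c' a" "a \<in> T"
  shows "c = c'"
proof -
  have "P c c' \<or> P c' c"
    using predecessors_comparable assms isuccD by blast
  then show ?thesis
    using assms isucc_between isuccD by metis
qed

lemma meet_exists:
  assumes "a \<in> T" "b \<in> T"
  shows "\<exists>m\<in>T. P m a \<and> P m b \<and> (\<forall>u\<in>T. P u a \<and> P u b \<longrightarrow> P u m)"
proof -
  let ?A = "{u \<in> T. P u a \<and> P u b}"
  have "?A \<noteq> {}" using tree_root_exists assms by blast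
  then obtain m where m: "m \<in> ?A" "\<forall>y\<in>?A. P m y \<longrightarrow> y = m"
    using exists_maximal[of ?A] by blast
  have "P u m" if "u \<in> ?A" for u
    using that m predecessors_comparable[of a u m] assms tree_refl by blast
  then show ?thesis using m(1) by blast
qed

lemma tmeet_eqI:
  assumes "m \<in> T" "P m a" "P m b" "\<forall>u\<in>T. P u a \<and> P u b \<longrightarrow> P u m"
  shows "tmeet T P a b = m"
  unfolding tmeet_def by (rule the_equality) (use assms tree_antisym in blast)+

lemma tmeet_commute: "tmeet T P a b = tmeet T P b a"
  unfolding tmeet_def by metis

lemma isucc_exists:
  assumes "m \<in> T" "a \<in> T" "P m a" "m \<noteq> a"
  shows "\<exists>c. isucc T P m c \<and> P c a"
proof -
  let ?B = "{u \<in> T. P m u \<and> P u a \<and> u \<noteq> m}"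
  have "a \<in> ?B" using assms tree_refl by blast
  then obtain c where c: "c \<in> ?B" "\<forall>y\<in>?B. P y c \<longrightarrow> y = c"
    using exists_minimal[of ?B] by blast
  have "u = m \<or> u = c" if "u \<in> T" "P m u" "P u c" for u
    using that c tree_trans[of u c a] assms by blast
  then have "isucc T P m c"
    unfolding isucc_def using c(1) assms(1) by blast
  then show ?thesis using c(1) by blast
qed

lemma child_toward_eqI:
  assumes "isucc T P m c" "P c a" "a \<in> T"
  shows "child_toward T P m a = c"
  unfolding child_toward_def by (rule the_equality) (use assms isucc_unique in blast)+

lemma isucc_le_of_same_branch:
  assumes "isucc T P n d" "P d b" "P x b" "P n x" "n \<noteq> x" "x \<in> T" "b \<in> T"
  shows "P d x"
proof -
  have "d \<in> T" using assms(1) isuccD by blast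
  then have "P d x \<or> P x d" using predecessors_comparable assms by blast
  then show ?thesis using isucc_between assms tree_refl by metis
qed

lemma branching_point:
  assumes ca: "isucc T P m ca" "P ca a" and cb: "isucc T P m cb" "P cb b"
    and "ca \<noteq> cb" "a \<in> T" "b \<in> T"
  shows "\<not> P a b" "\<not> P b a" "tmeet T P a b = m"
    "child_toward T P m a = ca" "child_toward T P m b = cb"
proof -
  have T: "m \<in> T" "ca \<in> T" "cb \<in> T" "P m ca" "P m cb"
    using ca(1) cb(1) isuccD by auto
  have ma: "P m a" and mb: "P m b"
    using tree_trans T assms by blast+
  show "\<not> P a b"
    using isucc_unique[OF ca(1) cb(1) _ cb(2)] tree_trans[of ca a b] T assms by blast
  show "\<not> P b a"
    using isucc_unique[OF ca(1) cb(1) ca(2)] tree_trans[of cb b a] T assms by blast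
  show "child_toward T P m a = ca" "child_toward T P m b = cb"
    using child_toward_eqI assms by blast+
  have "P u m" if u: "u \<in> T" "P u a" "P u b" for u
  proof (rule ccontr)
    assume "\<not> P u m"
    then have "P m u" "m \<noteq> u"
      using predecessors_comparable[of a u m] u T ma assms tree_refl by auto
    then obtain c where c: "isucc T P m c" "P c u"
      using isucc_exists T(1) u(1) by blast
    have "c \<in> T" using c(1) isuccD by blast
    then have "c = ca" "c = cb"
      using isucc_unique[OF c(1) ca(1) _ ca(2)] isucc_unique[OF c(1) cb(1) _ cb(2)]
        tree_trans[of c u a] tree_trans[of c u b] u c(2) assms by blast+
    then show False using assms(5) by simp
  qed
  then show "tmeet T P a b = m"
    using tmeet_eqI T(1) ma mb by blast
qed

lemma incomparable_branch:
  assumes "a \<in> T" "b \<in> T" "\<not> P a b" "\<not> P b a"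
  obtains m ca cb where "isucc T P m ca" "P ca a" "isucc T P m cb" "P cb b" "ca \<noteq> cb"
proof -
  obtain m where m: "m \<in> T" "P m a" "P m b" "\<forall>u\<in>T. P u a \<and> P u b \<longrightarrow> P u m"
    using meet_exists assms by blast
  then have "m \<noteq> a" "m \<noteq> b" using assms by auto
  then obtain ca cb where c: "isucc T P m ca" "P ca a" "isucc T P m cb" "P cb b"
    using isucc_exists m assms by metis
  have "ca \<noteq> cb"
  proof
    assume "ca = cb"
    then have "P ca m" using m(4) c isuccD by blast
    then show False using c(1) isuccD tree_antisym by blast
  qed
  then show ?thesis using that c by blast
qed

text \<open>Describing \<open>lex\<close> by arbitrary branching witnesses \<open>(m, ca, cb)\<close> instead of
  \<open>tmeet\<close> and \<open>child_toward\<close> turns transitivity into a short case analysis.\<close>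

lemma lex_iff_branching:
  "lex T P L a b \<longleftrightarrow> a \<in> T \<and> b \<in> T \<and> (P a b \<or>
     (\<exists>m ca cb. isucc T P m ca \<and> P ca a \<and> isucc T P m cb \<and> P cb b \<and> ca \<noteq> cb \<and> L ca cb))"
  (is "_ \<longleftrightarrow> _ \<and> _ \<and> (_ \<or> ?branch)")
proof (cases "a \<in> T \<and> b \<in> T \<and> \<not> P a b \<and> \<not> P b a")
  case True
  then obtain m ca cb where br: "isucc T P m ca" "P ca a" "isucc T P m cb" "P cb b" "ca \<noteq> cb"
    using incomparable_branch by metis
  have ab: "a \<in> T" "b \<in> T" using True by auto
  note m = branching_point[OF br ab]
  have "?branch \<longleftrightarrow> L ca cb"
  proof
    assume ?branch
    then obtain n da db where
      br': "isucc T P n da" "P da a" "isucc T P n db" "P db b" "da \<noteq> db" "L da db"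
      by blast
    note n = branching_point[OF br'(1-5) ab]
    have "n = m" using m(3) n(3) by simp
    then show "L ca cb" using m(4,5) n(4,5) br'(6) by simp
  qed (use br in blast)
  then show ?thesis using m True unfolding lex_def by auto
next
  case False
  then show ?thesis
    using branching_point(2) unfolding lex_def by blast
qed

definition downward_closed :: "'a set \<Rightarrow> bool" where
  "downward_closed D \<longleftrightarrow> D \<subseteq> T \<and> (\<forall>w\<in>D. \<forall>u\<in>T. P u w \<longrightarrow> u \<in> D)"

lemma isucc_downward_closed:
  assumes "downward_closed D" "c \<in> D"
  shows "isucc D P m c \<longleftrightarrow> isucc T P m c"
  using assms unfolding downward_closed_def isucc_def by blast

lemma tmeet_downward_closed:
  assumes "downward_closed D" "a \<in> D" "b \<in> D"
  shows "tmeet D P a b = tmeet T P a b"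
proof -
  have "(u \<in> D \<and> P u a \<and> P u b \<and> (\<forall>u'\<in>D. P u' a \<and> P u' b \<longrightarrow> P u' u))
      = (u \<in> T \<and> P u a \<and> P u b \<and> (\<forall>u'\<in>T. P u' a \<and> P u' b \<longrightarrow> P u' u))" for u
    using assms unfolding downward_closed_def by blast
  then show ?thesis unfolding tmeet_def by simp
qed

lemma child_toward_downward_closed:
  assumes "downward_closed D" "a \<in> D"
  shows "child_toward D P m a = child_toward T P m a"
proof -
  have "c \<in> D" if "P c a" "c \<in> T" for c
    using that assms unfolding downward_closed_def by blast
  then have "(isucc D P m c \<and> P c a) = (isucc T P m c \<and> P c a)" for c
    using isucc_downward_closed[OF assms(1)] unfolding isucc_def by blast
  then show ?thesis unfolding child_toward_def by simp
qed

lemma lex_downward_closed: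
  assumes "downward_closed D" "a \<in> D" "b \<in> D"
  shows "lex D P L a b \<longleftrightarrow> lex T P L a b"
proof -
  have "a \<in> T" "b \<in> T" using assms unfolding downward_closed_def by blast+
  then show ?thesis
    using assms(2,3) unfolding lex_def
    by (simp add: tmeet_downward_closed[OF assms] child_toward_downward_closed[OF assms(1,2)]
        child_toward_downward_closed[OF assms(1,3)])
qed

lemma troot_downward_closed:
  assumes "downward_closed D" "D \<noteq> {}"
  shows "troot D P = troot T P"
proof -
  obtain r where r: "r \<in> T" "\<forall>x\<in>T. P r x" using tree_root_exists by blast
  have D: "D \<subseteq> T" "r \<in> D" using assms r unfolding downward_closed_def by blast+
  have "troot D P = r"
    unfolding troot_def by (rule the_equality) (use D r tree_antisym in blast)+
  then show ?thesis using troot_eqI[OF r] by simp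
qed

end

locale ordered_rooted_tree = rooted_tree T P for T :: "'a set" and P +
  fixes L :: "'a \<Rightarrow> 'a \<Rightarrow> bool"
  assumes ordered: "ordered_tree T P L"
begin

lemma sibling_antisym: "isucc T P m x \<Longrightarrow> isucc T P m y \<Longrightarrow> L x y \<Longrightarrow> L y x \<Longrightarrow> x = y"
  using ordered isuccD unfolding ordered_tree_def Let_def by (metis mem_Collect_eq)

lemma sibling_trans:
  "isucc T P m x \<Longrightarrow> isucc T P m y \<Longrightarrow> isucc T P m z \<Longrightarrow> L x y \<Longrightarrow> L y z \<Longrightarrow> L x z"
  using ordered isuccD unfolding ordered_tree_def Let_def by (metis mem_Collect_eq)

lemma sibling_total: "isucc T P m x \<Longrightarrow> isucc T P m y \<Longrightarrow> L x y \<or> L y x"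
  using ordered isuccD unfolding ordered_tree_def Let_def by (metis mem_Collect_eq)

lemma lex_refl: "a \<in> T \<Longrightarrow> lex T P L a a"
  unfolding lex_def using tree_refl by blast

lemma lex_if_pred: "a \<in> T \<Longrightarrow> b \<in> T \<Longrightarrow> P a b \<Longrightarrow> lex T P L a b"
  unfolding lex_def by blast

lemma lex_antisym:
  assumes "lex T P L a b" "lex T P L b a"
  shows "a = b"
proof (cases "P a b \<or> P b a")
  case True
  then show ?thesis
    using assms tree_antisym branching_point(1,2) unfolding lex_iff_branching by metis
next
  case False
  then obtain m ca cb n db da where
    ab: "isucc T P m ca" "P ca a" "isucc T P m cb" "P cb b" "ca \<noteq> cb" "L ca cb" and
    ba: "isucc T P n db" "P db b" "isucc T P n da" "P da a" "db \<noteq> da" "L db da" and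
    T: "a \<in> T" "b \<in> T"
    using assms unfolding lex_iff_branching by blast
  note m = branching_point[OF ab(1-5) T] and n = branching_point[OF ba(1-5) T(2,1)]
  have "m = n" using m(3) n(3) tmeet_commute by metis
  then have "ca = da" "cb = db" using m(4,5) n(4,5) by simp_all
  then show ?thesis using ab ba sibling_antisym by metis
qed

lemma lex_total:
  assumes "a \<in> T" "b \<in> T"
  shows "lex T P L a b \<or> lex T P L b a"
proof (cases "P a b \<or> P b a")
  case False
  then obtain m ca cb where "isucc T P m ca" "P ca a" "isucc T P m cb" "P cb b" "ca \<noteq> cb"
    using incomparable_branch assms by metis
  then show ?thesis
    unfolding lex_iff_branching using sibling_total assms by metis
qed (use assms in \<open>auto simp: lex_def\<close>)

lemma lex_trans_branching:
  assumes bb: "isucc T P m ca" "P ca a" "isucc T P m cb" "P cb b" "ca \<noteq> cb" "L ca cb"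
    "isucc T P n db" "P db b" "isucc T P n dc" "P dc c" "db \<noteq> dc" "L db dc"
    and T: "a \<in> T" "b \<in> T" "c \<in> T"
  shows "lex T P L a c"
proof -
  have mn: "m \<in> T" "n \<in> T" "P m b" "P n b" "P m a" "P n c"
    using bb isuccD tree_trans T by blast+
  consider "m = n" | "P m n" "m \<noteq> n" | "P n m" "n \<noteq> m"
    using predecessors_comparable[of b m n] mn T by blast
  then show ?thesis
  proof cases
    case 1
    have "cb = db" using isucc_unique[OF bb(3) bb(7)[folded 1] bb(4) bb(8) T(2)] .
    then have "L ca dc" using sibling_trans[OF bb(1) bb(3) bb(9)[folded 1] bb(6)] bb(12) by simp
    moreover have "ca \<noteq> dc"
      using sibling_antisym[OF bb(1) bb(3) bb(6)] bb(5,12) \<open>cb = db\<close> by blast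
    ultimately show ?thesis using 1 bb T unfolding lex_iff_branching by blast
  next
    case 2
    then have "P cb n" using isucc_le_of_same_branch bb mn T by blast
    then have "P cb c" using tree_trans mn bb T isuccD by blast
    then show ?thesis using bb T unfolding lex_iff_branching by blast
  next
    case 3
    then have "P db m" using isucc_le_of_same_branch bb mn T by blast
    then have "P db a" using tree_trans mn bb T isuccD by blast
    then show ?thesis using bb T unfolding lex_iff_branching by blast
  qed
qed

lemma lex_trans:
  assumes ab: "lex T P L a b" and bc: "lex T P L b c"
  shows "lex T P L a c"
proof -
  have T: "a \<in> T" "b \<in> T" "c \<in> T" using ab bc unfolding lex_def by blast+
  consider (pred_pred) "P a b" "P b c"
    | (pred_branch) n db dc where "P a b"
        "isucc T P n db" "P db b" "isucc T P n dc" "P dc c" "db \<noteq> dc" "L db dc"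
    | (branch_pred) m ca cb where
        "isucc T P m ca" "P ca a" "isucc T P m cb" "P cb b" "ca \<noteq> cb" "L ca cb" "P b c"
    | (branch_branch) m ca cb n db dc where
        "isucc T P m ca" "P ca a" "isucc T P m cb" "P cb b" "ca \<noteq> cb" "L ca cb"
        "isucc T P n db" "P db b" "isucc T P n dc" "P dc c" "db \<noteq> dc" "L db dc"
    using ab bc unfolding lex_iff_branching by blast
  then show ?thesis
  proof cases
    case pred_pred
    then show ?thesis using T tree_trans lex_if_pred by blast
  next
    case pred_branch
    have n: "n \<in> T" "P n b" "P n c" using pred_branch isuccD tree_trans T by blast+
    show ?thesis
    proof (cases "P a n")
      case True
      then show ?thesis using n T tree_trans lex_if_pred by blast
    next
      case False
      then have "P n a" "n \<noteq> a"
        using predecessors_comparable[of b a n] pred_branch n T tree_refl by auto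
      then have "P db a" using isucc_le_of_same_branch pred_branch T by blast
      then show ?thesis using pred_branch T unfolding lex_iff_branching by blast
    qed
  next
    case branch_pred
    then have "P cb c" using tree_trans T isuccD by blast
    then show ?thesis using branch_pred T unfolding lex_iff_branching by blast
  next
    case branch_branch
    show ?thesis by (rule lex_trans_branching[OF branch_branch T])
  qed
qed

lemma downward_closed_lexdown: "downward_closed (lexdown T P L v)"
proof -
  have "lex T P L u v" if "lex T P L w v" "w \<in> T" "u \<in> T" "P u w" for u w
    using lex_trans[OF lex_if_pred that(1)] that by blast
  then show ?thesis unfolding downward_closed_def lexdown_def by blast
qed

lemma mem_lexdown_self: "v \<in> T \<Longrightarrow> v \<in> lexdown T P L v"
  unfolding lexdown_def using lex_refl by blast

lemma largest_leaf_lexdown: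
  assumes "v \<in> T" "largest_leaf (lexdown T P L v) P L l"
  shows "l = v"
proof -
  let ?D = "lexdown T P L v"
  have l: "l \<in> ?D" using assms(2) unfolding largest_leaf_def leaf_def by blast
  have "y = v" if "y \<in> ?D" "P v y" for y
    using that assms(1) lex_if_pred[of v y] lex_antisym unfolding lexdown_def by blast
  then have "leaf ?D P v" unfolding leaf_def using mem_lexdown_self assms(1) by blast
  then have "lex ?D P L v l" using assms(2) unfolding largest_leaf_def by blast
  then have "lex T P L v l"
    using lex_downward_closed downward_closed_lexdown mem_lexdown_self assms(1) l by blast
  moreover have "lex T P L l v" using l unfolding lexdown_def by blast
  ultimately show ?thesis using lex_antisym by blast
qed

end

lemma ordered_rooted_treeI: "ordered_tree T P L \<Longrightarrow> ordered_rooted_tree T P L"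
  unfolding ordered_rooted_tree_def ordered_rooted_tree_axioms_def rooted_tree_def ordered_tree_def
  by blast

lemma is_injection_image_eq:
  assumes "is_injection T PT LT S PS LS f e"
  shows "f ` T = S"
proof
  show "f ` T \<subseteq> S" using assms unfolding is_injection_def by blast
  show "S \<subseteq> f ` T"
  proof
    fix s assume "s \<in> S"
    then have "e s \<in> T" "f (e s) = s" using assms unfolding is_injection_def morphism_def by blast+
    then show "s \<in> f ` T" by (metis image_eqI)
  qed
qed

lemma morphism_image_lexdown:
  assumes "morphism S PS LS T PT LT e" "s \<in> S"
  shows "e ` lexdown S PS LS s \<subseteq> lexdown T PT LT (e s)"
  using assms unfolding morphism_def lexdown_def by blast

lemma morphism_restrict:
  assumes "rooted_tree S PS" "rooted_tree T PT" "morphism S PS LS T PT LT e"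
    and D: "rooted_tree.downward_closed S PS D" "D \<noteq> {}"
    and E: "rooted_tree.downward_closed T PT E" "e ` D \<subseteq> E"
  shows "morphism D PS LS E PT LT e"
proof -
  interpret S: rooted_tree S PS by fact
  interpret T: rooted_tree T PT by fact
  have "D \<subseteq> S" using D(1) unfolding S.downward_closed_def by blast
  then have e: "\<forall>x\<in>D. e x \<in> E"
    "\<forall>v\<in>D. \<forall>w\<in>D. e (tmeet S PS v w) = tmeet T PT (e v) (e w)"
    "\<forall>v\<in>D. \<forall>w\<in>D. lex S PS LS v w \<longrightarrow> lex T PT LT (e v) (e w)"
    "e (troot S PS) = troot T PT"
    using assms(3) E(2) unfolding morphism_def by blast+
  have "E \<noteq> {}" using D(2) E(2) by blast
  then show ?thesis
    unfolding morphism_def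
    using e S.tmeet_downward_closed[OF D(1)] T.tmeet_downward_closed[OF E(1)]
      S.lex_downward_closed[OF D(1)] T.lex_downward_closed[OF E(1)]
      S.troot_downward_closed[OF D] T.troot_downward_closed[OF E(1)]
    by simp
qed

lemma is_injection_restrict:
  assumes "rooted_tree T PT" "rooted_tree S PS" "is_injection T PT LT S PS LS f e"
    and D: "rooted_tree.downward_closed T PT D" "f ` D \<subseteq> E"
    and E: "rooted_tree.downward_closed S PS E" "E \<noteq> {}" "e ` E \<subseteq> D"
  shows "is_injection D PT LT E PS LS (restrict f D) e"
proof -
  have "D \<subseteq> T" "E \<subseteq> S"
    using D(1) E(1) rooted_tree.downward_closed_def[OF assms(1)]
      rooted_tree.downward_closed_def[OF assms(2)] by blast+
  moreover have "morphism E PS LS D PT LT e"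
    using morphism_restrict assms unfolding is_injection_def by blast
  ultimately show ?thesis
    using assms(3) D(2) E(3) unfolding is_injection_def by auto
qed

lemma is_injection_image_lexdown:
  assumes "ordered_tree S PS LS" "ordered_tree T PT LT" "is_injection T PT LT S PS LS f i"
    and "v \<in> S"
  shows "f ` lexdown T PT LT (i v) \<subseteq> lexdown S PS LS v"
proof
  interpret S: ordered_rooted_tree S PS LS using assms(1) by (rule ordered_rooted_treeI)
  interpret T: ordered_rooted_tree T PT LT using assms(2) by (rule ordered_rooted_treeI)
  fix x assume "x \<in> f ` lexdown T PT LT (i v)"
  then obtain w where x: "x = f w" and w: "w \<in> T" "lex T PT LT w (i v)"
    unfolding lexdown_def by blast
  have i: "i v \<in> T" "f w \<in> S" "i (f w) \<in> T" "PT (i (f w)) w" "f (i v) = v"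
    using assms(3,4) w(1) unfolding is_injection_def morphism_def by blast+
  have "lex S PS LS (f w) v"
  proof (rule ccontr)
    assume "\<not> lex S PS LS (f w) v"
    then have "lex S PS LS v (f w)" using S.lex_total i(2) assms(4) by blast
    then have "lex T PT LT (i v) (i (f w))"
      using assms(3,4) i(2) unfolding is_injection_def morphism_def by blast
    moreover have "lex T PT LT (i (f w)) w" using T.lex_if_pred i(3,4) w(1) by blast
    ultimately have "w = i v" using T.lex_trans T.lex_antisym w(2) by blast
    then show False using \<open>\<not> lex S PS LS (f w) v\<close> i(5) S.lex_refl assms(4) by simp
  qed
  then show "x \<in> lexdown S PS LS v" using x i(2) unfolding lexdown_def by blast
qed

theorem lemma4p2:
  fixes T :: "'a set" and PT LT :: "'a \<Rightarrow> 'a \<Rightarrow> bool"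
    and S :: "'b set" and PS LS :: "'b \<Rightarrow> 'b \<Rightarrow> bool"
    and f :: "'a \<Rightarrow> 'b" and i :: "'b \<Rightarrow> 'a" and v :: 'b
  assumes "ordered_tree S PS LS" and "ordered_tree T PT LT"
    and "is_injection T PT LT S PS LS f i"
    and "v \<in> S"
  shows "(restrict f (lexdown T PT LT (i v))) ` lexdown T PT LT (i v) = lexdown S PS LS v
       \<and> sealed_rigid_surj (lexdown T PT LT (i v)) PT LT (lexdown S PS LS v) PS LS
           (restrict f (lexdown T PT LT (i v)))"
proof -
  interpret S: ordered_rooted_tree S PS LS using assms(1) by (rule ordered_rooted_treeI)
  interpret T: ordered_rooted_tree T PT LT using assms(2) by (rule ordered_rooted_treeI)
  define D where "D = lexdown T PT LT (i v)"
  define E where "E = lexdown S PS LS v"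
  have mor: "morphism S PS LS T PT LT i" using assms(3) unfolding is_injection_def by blast
  then have iv: "i v \<in> T" using assms(4) unfolding morphism_def by blast
  have iE: "i ` E \<subseteq> D"
    unfolding D_def E_def by (rule morphism_image_lexdown[OF mor assms(4)])
  have fD: "f ` D \<subseteq> E"
    unfolding D_def E_def by (rule is_injection_image_lexdown[OF assms])
  have "E \<noteq> {}" unfolding E_def using S.mem_lexdown_self[OF assms(4)] by blast
  then have inj: "is_injection D PT LT E PS LS (restrict f D) i"
    using is_injection_restrict[OF T.rooted_tree_axioms S.rooted_tree_axioms assms(3) _ fD _ _ iE]
      T.downward_closed_lexdown S.downward_closed_lexdown
    unfolding D_def E_def by blast
  have "restrict f D ` D = E" by (rule is_injection_image_eq[OF inj])
  moreover have "sealed_rigid_surj D PT LT E PS LS (restrict f D)"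
    using inj S.largest_leaf_lexdown[OF assms(4)] T.largest_leaf_lexdown[OF iv]
    unfolding sealed_rigid_surj_def D_def E_def by blast
  ultimately show ?thesis unfolding D_def E_def by blast
qed

end
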